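(* Let $f_0$ be an arithmetic function with $f_0(1)=1$ and let $m>1$. Let $\alpha$ be a finite alphabet and $\mathcal R$ a set of words over $\alpha$ (the $\mathcal R$-restricted words) such that for every $n\ge1$, $f_{m-1}(n)$ equals the number of words of length $n-1$ over $\alpha$ belonging to $\mathcal R$. Let $x$ be a letter not in $\alpha$. Then for all $1\le k\le n$, $c_m(n,k)$ equals the number of $\mathcal R$-restricted words of length $n-1$ over $\alpha\cup\{x\}$ in which $x$ appears exactly $k-1$ times.
   Context: An arithmetic function is a function $f_0:\{1,2,\ldots\}\to\mathbb{C}$. For $m\ge 1$, $f_m$ is the invert transform of $f_{m-1}$, i.e. $f_m(n)=f_{m-1}(n)+\sum_{i=1}^{n-1}f_{m-1}(i)f_m(n-i)$ for $n\ge1$. For $m\ge1$ the numbers $c_m(n,k)$, $0\le k\le n$, are defined by $c_m(0,0)=1$, $c_m(n,0)=0$ for $n\ge1$, and $c_m(n,k)=\sum_{i=1}^{n-k+1}f_{m-1}(i)\,c_m(n-i,k-1)$ for $1\le k\le n$. Words may be empty (length $0$). The restriction $\mathcal R$ concerns only letters of $\alpha$: a word over $\alpha\cup\{x\}$ with exactly $k-1$ occurrences of $x$ is written uniquely as $w_1\,x\,w_2\,x\cdots x\,w_k$ with each $w_j$ a (possibly empty) word over $\alpha$, and it is called $\mathcal R$-restricted if every $w_j$ belongs to $\mathcal R$. *)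

theory Defs
  imports Complex_Main
begin

text \<open>Arithmetic functions are modelled as functions nat => complex; the value at 0
is irrelevant (never used).\<close>

function invt :: "(nat \<Rightarrow> complex) \<Rightarrow> nat \<Rightarrow> complex" where
  "invt g n = (if n = 0 then 0
               else g n + (\<Sum>i\<in>{1..n-1}. g i * invt g (n - i)))"
  by pat_completeness auto
termination
  by (relation "measure (\<lambda>(g, n). n)") auto

definition fiter :: "(nat \<Rightarrow> complex) \<Rightarrow> nat \<Rightarrow> nat \<Rightarrow> complex" where
  "fiter f0 m = (invt ^^ m) f0"

fun ctri :: "(nat \<Rightarrow> complex) \<Rightarrow> nat \<Rightarrow> nat \<Rightarrow> complex" where
  "ctri g n 0 = (if n = 0 then 1 else 0)"
| "ctri g n (Suc k) = (if Suc k \<le> n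
      then (\<Sum>i\<in>{1..n - Suc k + 1}. g i * ctri g (n - i) k) else 0)"

definition cm :: "(nat \<Rightarrow> complex) \<Rightarrow> nat \<Rightarrow> nat \<Rightarrow> nat \<Rightarrow> complex" where
  "cm f0 m n k = ctri (fiter f0 (m - 1)) n k"

fun joinx :: "'a \<Rightarrow> 'a list list \<Rightarrow> 'a list" where
  "joinx x [] = []"
| "joinx x [u] = u"
| "joinx x (u # v # us) = u @ x # joinx x (v # us)"

definition restricted :: "'a set \<Rightarrow> 'a list set \<Rightarrow> 'a \<Rightarrow> 'a list \<Rightarrow> bool" where
  "restricted \<alpha> R x w \<longleftrightarrow>
     (\<exists>ws. ws \<noteq> [] \<and> w = joinx x ws \<and>
           (\<forall>u\<in>set ws. set u \<subseteq> \<alpha> \<and> u \<in> R))"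

end

theory Submission
  imports Defs
begin

text \<open>A word of length n - 1 with exactly k - 1 letters x splits at the letters x into k
  blocks over \<alpha>; giving a block u the weight length u + 1, the block weights form a
  composition of n into k parts.  So the restricted words are in bijection with the lists of
  k words of R of total weight n, and these lists satisfy the recursion of the triangle c
  (split off the first block), with f_{m-1}(i) counting the first blocks of weight i.\<close>

definition blocks :: "'a list set \<Rightarrow> nat \<Rightarrow> nat \<Rightarrow> 'a list list set" where
  "blocks R k n = {ws. length ws = k \<and> set ws \<subseteq> R \<and> (\<Sum>u\<leftarrow>ws. length u + 1) = n}"

lemma blocks_0: "blocks R 0 n = (if n = 0 then {[]} else {})"
  by (auto simp: blocks_def)

lemma length_le_block_weight: "length ws \<le> (\<Sum>u\<leftarrow>ws. length u + 1)"
  by (induction ws) auto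

lemma blocks_eq_empty: "n < k \<Longrightarrow> blocks R k n = {}"
  using length_le_block_weight not_le by (auto simp: blocks_def)

lemma finite_blocks:
  assumes "finite \<alpha>" "R \<subseteq> lists \<alpha>"
  shows "finite (blocks R k n)"
proof -
  let ?W = "{u. set u \<subseteq> \<alpha> \<and> length u \<le> n}"
  have "length u \<le> n" if "ws \<in> blocks R k n" "u \<in> set ws" for u ws
  proof -
    have "length u + 1 \<le> (\<Sum>v\<leftarrow>ws. length v + 1)"
      using that(2) by (intro member_le_sum_list) auto
    with that(1) show ?thesis by (simp add: blocks_def)
  qed
  then have "blocks R k n \<subseteq> {ws. set ws \<subseteq> ?W \<and> length ws = k}"
    using assms(2) by (fastforce simp: blocks_def)
  moreover have "finite {ws. set ws \<subseteq> ?W \<and> length ws = k}"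
    using finite_lists_length_le[OF assms(1)] by (intro finite_lists_length_eq) simp
  ultimately show ?thesis
    by (rule finite_subset)
qed

lemma blocks_Suc:
  "blocks R (Suc k) n =
     (\<Union>i\<in>{1..n}. (\<lambda>(u, ws). u # ws) ` ({u \<in> R. length u = i - 1} \<times> blocks R k (n - i)))"
proof (intro set_eqI iffI)
  fix vs assume "vs \<in> blocks R (Suc k) n"
  then obtain u ws where "vs = u # ws" "u \<in> R" "ws \<in> blocks R k (n - (length u + 1))"
    "length u + 1 \<in> {1..n}"
    by (cases vs) (auto simp: blocks_def)
  then show "vs \<in> (\<Union>i\<in>{1..n}. (\<lambda>(u, ws). u # ws) ` ({u \<in> R. length u = i - 1} \<times> blocks R k (n - i)))"
    by (intro UN_I[of "length u + 1"]) (auto intro!: image_eqI[of _ _ "(u, ws)"])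
qed (auto simp: blocks_def)

lemma card_blocks_Suc:
  assumes "finite \<alpha>" "R \<subseteq> lists \<alpha>"
  shows "card (blocks R (Suc k) n) =
           (\<Sum>i\<in>{1..n}. card {u \<in> R. length u = i - 1} * card (blocks R k (n - i)))"
proof -
  let ?B = "\<lambda>i. {u \<in> R. length u = i - 1}"
  let ?cons = "\<lambda>(u, ws). u # ws"
  have "finite (?B i)" for i
    using assms by (intro finite_subset[OF _ finite_lists_length_eq[OF assms(1), of "i - 1"]]) auto
  moreover have "inj_on ?cons X" for X :: "('a list \<times> 'a list list) set"
    by (auto simp: inj_on_def)
  ultimately have "card (blocks R (Suc k) n) = (\<Sum>i\<in>{1..n}. card (?cons ` (?B i \<times> blocks R k (n - i))))"
    unfolding blocks_Suc using finite_blocks[OF assms]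
    by (intro card_UN_disjoint) auto
  also have "\<dots> = (\<Sum>i\<in>{1..n}. card (?B i) * card (blocks R k (n - i)))"
    using \<open>inj_on ?cons _\<close> by (simp add: card_image card_cartesian_product)
  finally show ?thesis .
qed

lemma ctri_eq_card_blocks:
  assumes "finite \<alpha>" "R \<subseteq> lists \<alpha>"
    and g: "\<And>i. i \<ge> 1 \<Longrightarrow> g i = of_nat (card {u \<in> R. length u = i - 1})"
  shows "ctri g n k = of_nat (card (blocks R k n))"
proof (induction k arbitrary: n)
  case 0
  then show ?case by (simp add: blocks_0)
next
  case (Suc k)
  show ?case
  proof (cases "Suc k \<le> n")
    case False
    then show ?thesis by (simp add: blocks_eq_empty)
  next
    case True
    have "ctri g n (Suc k) = (\<Sum>i\<in>{1..n - Suc k + 1}. g i * ctri g (n - i) k)"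
      using True by simp
    also have "\<dots> = (\<Sum>i\<in>{1..n}. g i * ctri g (n - i) k)"
      using True Suc.IH by (intro sum.mono_neutral_left) (auto simp: blocks_eq_empty)
    also have "\<dots> = of_nat (\<Sum>i\<in>{1..n}. card {u \<in> R. length u = i - 1} * card (blocks R k (n - i)))"
      by (simp add: g Suc.IH)
    also have "\<dots> = of_nat (card (blocks R (Suc k) n))"
      by (simp add: card_blocks_Suc[OF assms(1,2)])
    finally show ?thesis .
  qed
qed

lemma count_list_joinx:
  "\<forall>u\<in>set ws. x \<notin> set u \<Longrightarrow> ws \<noteq> [] \<Longrightarrow> count_list (joinx x ws) x + 1 = length ws"
  by (induction x ws rule: joinx.induct) (auto simp: count_list_0_iff)

lemma length_joinx:
  "ws \<noteq> [] \<Longrightarrow> length (joinx x ws) + 1 = (\<Sum>u\<leftarrow>ws. length u + 1)"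
  by (induction x ws rule: joinx.induct) auto

lemma set_joinx: "set (joinx x ws) \<subseteq> insert x (\<Union>u\<in>set ws. set u)"
  by (induction x ws rule: joinx.induct) auto

lemma joinx_inject:
  assumes "\<forall>u\<in>set ws. x \<notin> set u" "\<forall>v\<in>set vs. x \<notin> set v" "ws \<noteq> []" "vs \<noteq> []"
    and "joinx x ws = joinx x vs"
  shows "ws = vs"
  using assms
proof (induction x ws arbitrary: vs rule: joinx.induct)
  case (1 x)
  then show ?case by simp
next
  case (2 x u)
  then show ?case
    by (cases vs rule: remdups_adj.cases) auto
next
  case (3 x u u' us)
  show ?case
  proof (cases vs rule: remdups_adj.cases)
    case (3 v v' vs')
    have "u @ x # joinx x (u' # us) = v @ x # joinx x (v' # vs')"
      using "3.prems"(5) \<open>vs = v # v' # vs'\<close> by simp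
    then have "u = v" "joinx x (u' # us) = joinx x (v' # vs')"
      using "3.prems"(1,2) \<open>vs = v # v' # vs'\<close>
      by (auto simp: append_eq_append_conv2 append_eq_Cons_conv Cons_eq_append_conv)
    with "3.IH"[of "v' # vs'"] "3.prems"(1,2) \<open>vs = v # v' # vs'\<close> show ?thesis
      by auto
  qed (use 3 in auto)
qed

lemma restricted_words_eq_joinx_blocks:
  assumes "R \<subseteq> lists \<alpha>" "x \<notin> \<alpha>" "k \<ge> 1" "n \<ge> 1"
  shows "{w \<in> lists (insert x \<alpha>). length w = n - 1 \<and> count_list w x = k - 1 \<and> restricted \<alpha> R x w}
           = joinx x ` blocks R k n"
proof (intro set_eqI iffI)
  fix w
  assume "w \<in> {w \<in> lists (insert x \<alpha>). length w = n - 1 \<and> count_list w x = k - 1 \<and> restricted \<alpha> R x w}"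
  then obtain ws where ws: "ws \<noteq> []" "w = joinx x ws" "set ws \<subseteq> R" "\<forall>u\<in>set ws. x \<notin> set u"
    and w: "length w = n - 1" "count_list w x = k - 1"
    using assms(2) by (auto simp: restricted_def)
  have "length ws = k"
    using count_list_joinx[OF ws(4,1)] ws(2) w(2) assms(3) by simp
  moreover have "(\<Sum>u\<leftarrow>ws. length u + 1) = n"
    using length_joinx[OF ws(1), of x] ws(2) w(1) assms(4) by simp
  ultimately show "w \<in> joinx x ` blocks R k n"
    using ws by (auto simp: blocks_def)
next
  fix w
  assume "w \<in> joinx x ` blocks R k n"
  then obtain ws where ws: "w = joinx x ws" "length ws = k" "set ws \<subseteq> R" "(\<Sum>u\<leftarrow>ws. length u + 1) = n"
    by (auto simp: blocks_def)
  have ne: "ws \<noteq> []" and x_free: "\<forall>u\<in>set ws. x \<notin> set u"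
    using ws(2,3) assms by auto
  have "set w \<subseteq> insert x \<alpha>"
    using set_joinx[of x ws] ws(1,3) assms(1) by auto
  moreover have "restricted \<alpha> R x w"
    unfolding restricted_def using ne ws(1,3) assms(1) by auto
  ultimately show "w \<in> {w \<in> lists (insert x \<alpha>). length w = n - 1 \<and> count_list w x = k - 1 \<and> restricted \<alpha> R x w}"
    using count_list_joinx[OF x_free ne] length_joinx[OF ne, of x] ws by auto
qed

theorem proposition14:
  fixes f0 :: "nat \<Rightarrow> complex" and m :: nat
    and \<alpha> :: "'a set" and R :: "'a list set" and x :: "'a"
  assumes f01: "f0 1 = 1"
    and m1: "m > 1"
    and fin: "finite \<alpha>"
    and Rwords: "R \<subseteq> lists \<alpha>"
    and hR: "\<And>n. n \<ge> 1 \<Longrightarrow>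
        fiter f0 (m - 1) n = of_nat (card {w \<in> lists \<alpha>. length w = n - 1 \<and> w \<in> R})"
    and xnot: "x \<notin> \<alpha>"
  shows "\<forall>n k. 1 \<le> k \<and> k \<le> n \<longrightarrow>
    cm f0 m n k = of_nat (card {w \<in> lists (insert x \<alpha>). length w = n - 1 \<and>
                                   count_list w x = k - 1 \<and> restricted \<alpha> R x w})"
proof (intro allI impI)
  fix n k :: nat
  assume nk: "1 \<le> k \<and> k \<le> n"
  have "{w \<in> lists \<alpha>. length w = i - 1 \<and> w \<in> R} = {u \<in> R. length u = i - 1}" for i
    using Rwords by auto
  then have "cm f0 m n k = of_nat (card (blocks R k n))"
    unfolding cm_def using hR by (intro ctri_eq_card_blocks[OF fin Rwords]) simp
  moreover have "inj_on (joinx x) (blocks R k n)"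
    using Rwords xnot nk
    by (intro inj_onI joinx_inject) (auto simp: blocks_def)
  ultimately show "cm f0 m n k = of_nat (card {w \<in> lists (insert x \<alpha>). length w = n - 1 \<and>
                                   count_list w x = k - 1 \<and> restricted \<alpha> R x w})"
    using restricted_words_eq_joinx_blocks[OF Rwords xnot, of k n] nk by (simp add: card_image)
qed

end
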